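(* Let $E$ be a congruence on $\overline{\boldsymbol{T}(X_1,\ldots,X_n)}$. If there exist $f\in\overline{\boldsymbol{T}(X_1,\ldots,X_n)}\setminus\{-\infty\}$ and $t\in\boldsymbol{T}\setminus\{0\}$ such that $(f,f\odot t)\in E$, then $\boldsymbol{V}(E)=\varnothing$.
   Context: $\boldsymbol{T}=\mathbb{R}\cup\{-\infty\}$ with $a\oplus b=\max\{a,b\}$, $a\odot b=a+b$. $\overline{\boldsymbol{T}(X_1,\ldots,X_n)}$ is the semifield of fractions of the tropical polynomial function semiring (tropical polynomials modulo equality as functions $\boldsymbol{T}^n\to\boldsymbol{T}$); each element defines a function $\mathbb{R}^n\to\boldsymbol{T}$ (quotients evaluated as differences), non-$(-\infty)$ elements being real valued. A congruence is an equivalence relation compatible with both operations; $\boldsymbol{V}(E)=\{x\in\mathbb{R}^n\mid f(x)=g(x)\ \forall(f,g)\in E\}$. *)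

theory Defs
  imports "HOL-Analysis.Analysis" "HOL-Library.Extended_Real"
begin

text \<open>The tropical semifield T = R \<union> {-\<infinity>} is modelled inside ereal (the value \<infinity> never occurs).
 Tropical sum is max, tropical product is +.  Points of R^n are vectors real^'n.\<close>

definition trop_T :: "ereal set" where
  "trop_T = {x. x \<noteq> \<infinity>}"

text \<open>Tropical polynomial functions: maxima of finitely many monomials c + <a,x> with a in N^n,
 c real (the empty maximum is -\<infinity>).\<close>
definition trop_poly_funs :: "(real^'n \<Rightarrow> ereal) set" where
  "trop_poly_funs = {(\<lambda>x. SUP m\<in>M. ereal (snd m + (\<Sum>i\<in>UNIV. real (fst m $ i) * x $ i)))
                      | M :: ((nat^'n) \<times> real) set. finite M}"

text \<open>Semifield of fractions, realised as functions on R^n (quotients as differences).\<close>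
definition trop_rat_funs :: "(real^'n \<Rightarrow> ereal) set" where
  "trop_rat_funs = {(\<lambda>x. p x - q x) | p q. p \<in> trop_poly_funs \<and> q \<in> trop_poly_funs
                      \<and> q \<noteq> (\<lambda>x. - \<infinity>)}"

definition trop_congruence :: "(real^'n \<Rightarrow> ereal) rel \<Rightarrow> bool" where
  "trop_congruence E \<longleftrightarrow> equiv trop_rat_funs E \<and>
     (\<forall>f g h. (f, g) \<in> E \<longrightarrow> h \<in> trop_rat_funs \<longrightarrow>
         (\<lambda>x. max (f x) (h x), \<lambda>x. max (g x) (h x)) \<in> E \<and>
         (\<lambda>x. f x + h x, \<lambda>x. g x + h x) \<in> E)"

definition trop_V :: "(real^'n \<Rightarrow> ereal) rel \<Rightarrow> (real^'n) set" where
  "trop_V E = {x. \<forall>(f, g)\<in>E. f x = g x}"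

end

theory Submission
  imports Defs
begin

text \<open>A point of \<open>V(E)\<close> would satisfy \<open>f(x) = f(x) \<odot> t = f(x) + t\<close>; since a tropical rational
  function other than \<open>-\<infinity>\<close> is real valued everywhere, this forces \<open>t = 0\<close>.\<close>

lemma trop_poly_fun_bot_or_real:
  fixes p :: "real^'n \<Rightarrow> ereal"
  assumes "p \<in> trop_poly_funs"
  shows "p = (\<lambda>x. - \<infinity>) \<or> (\<forall>x. \<bar>p x\<bar> \<noteq> \<infinity>)"
proof -
  obtain M :: "((nat^'n) \<times> real) set" where "finite M"
    and p: "p = (\<lambda>x. SUP m\<in>M. ereal (snd m + (\<Sum>i\<in>UNIV. real (fst m $ i) * x $ i)))"
    using assms unfolding trop_poly_funs_def by blast
  show ?thesis
  proof (cases "M = {}")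
    case True
    then show ?thesis using p by (simp add: bot_ereal_def)
  next
    case False
    have "p x \<in> range ereal" for x
    proof -
      define g where "g m = ereal (snd m + (\<Sum>i\<in>UNIV. real (fst m $ i) * x $ i))" for m
      have "p x = Max (g ` M)"
        using p cSup_eq_Max[of "g ` M"] \<open>finite M\<close> False by (simp add: g_def)
      also have "\<dots> \<in> g ` M"
        using Max_in[of "g ` M"] \<open>finite M\<close> False by simp
      finally show ?thesis by (auto simp: g_def)
    qed
    then show ?thesis by auto
  qed
qed

lemma trop_rat_fun_real:
  assumes "f \<in> trop_rat_funs" and "f \<noteq> (\<lambda>x. - \<infinity>)"
  shows "\<bar>f x\<bar> \<noteq> \<infinity>"
proof -
  obtain p q where f: "f = (\<lambda>x. p x - q x)" and p: "p \<in> trop_poly_funs"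
    and q: "q \<in> trop_poly_funs" and q_not_bot: "q \<noteq> (\<lambda>x. - \<infinity>)"
    using assms(1) unfolding trop_rat_funs_def by blast
  have q_real: "\<bar>q y\<bar> \<noteq> \<infinity>" for y
    using trop_poly_fun_bot_or_real[OF q] q_not_bot by auto
  have "p \<noteq> (\<lambda>x. - \<infinity>)"
  proof
    assume "p = (\<lambda>x. - \<infinity>)"
    moreover have "- \<infinity> - q y = - \<infinity>" for y
      using q_real[of y] by (cases "q y") auto
    ultimately have "f = (\<lambda>x. - \<infinity>)"
      using f by simp
    then show False using assms(2) by simp
  qed
  then have "\<bar>p x\<bar> \<noteq> \<infinity>" using trop_poly_fun_bot_or_real[OF p] by auto
  then show ?thesis using q_real[of x] f by (cases "p x"; cases "q x") auto
qed

theorem lemma3p6: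
  fixes E :: "(real^'n \<Rightarrow> ereal) rel"
  assumes "trop_congruence E"
    and "f \<in> trop_rat_funs" and "f \<noteq> (\<lambda>x. - \<infinity>)"
    and "t \<in> trop_T" and "t \<noteq> 0"
    and "(f, (\<lambda>x. f x + t)) \<in> E"
  shows "trop_V E = {}"
proof (rule ccontr)
  assume "trop_V E \<noteq> {}"
  then obtain x where "x \<in> trop_V E" by blast
  then have "f x + 0 = f x + t" using assms(6) unfolding trop_V_def by auto
  moreover have "f x \<noteq> - \<infinity>" and "f x \<noteq> \<infinity>"
    using trop_rat_fun_real[OF assms(2,3), of x] by auto
  ultimately have "t = 0" using ereal_add_cancel_left[of "f x" 0 t] by simp
  with assms(5) show False by contradiction
qed

end
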